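(* Let $H$ be a countably infinite graph that contains a connected subgraph $F$ such that every vertex of $F$ has finite degree at least $4$ in $H$ and every vertex $v\in V(H)\setminus V(F)$ has a neighbor in $F$. Then $H$ admits a $3$-edge-coloring $c:E(H)\to\{1,2,3\}$ such that all vertices of $F$ and all vertices of infinite degree in $H$ are majority colored. In particular, every locally finite graph $H$ with $\delta(H)\ge 4$ has a majority $3$-edge-coloring.
   Context: A vertex $v$ is majority colored if for every color $\alpha$, the cardinality of the set of edges incident to $v$ colored $\alpha$ is at most the cardinality of the set of edges incident to $v$ not colored $\alpha$. A majority $3$-edge-coloring is a $3$-edge-coloring in which every vertex is majority colored. A graph is locally finite if every vertex has finite degree. *)

theory Defs
  imports Main "HOL-Library.Equipollence" "HOL-Library.Countable_Set"
begin

definition simple_graph :: "'a set \<Rightarrow> 'a set set \<Rightarrow> bool" where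
  "simple_graph V E \<longleftrightarrow> (\<forall>e\<in>E. card e = 2 \<and> e \<subseteq> V)"

definition incident :: "'a set set \<Rightarrow> 'a \<Rightarrow> 'a set set" where
  "incident E v = {e \<in> E. v \<in> e}"

definition finite_degree_ge :: "'a set set \<Rightarrow> nat \<Rightarrow> 'a \<Rightarrow> bool" where
  "finite_degree_ge E k v \<longleftrightarrow> finite (incident E v) \<and> card (incident E v) \<ge> k"

definition locally_finite :: "'a set \<Rightarrow> 'a set set \<Rightarrow> bool" where
  "locally_finite V E \<longleftrightarrow> (\<forall>v\<in>V. finite (incident E v))"

definition subgraph :: "'a set \<Rightarrow> 'a set set \<Rightarrow> 'a set \<Rightarrow> 'a set set \<Rightarrow> bool" where
  "subgraph VF EF V E \<longleftrightarrow> VF \<subseteq> V \<and> EF \<subseteq> E \<and> (\<forall>e\<in>EF. e \<subseteq> VF)"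

definition connected_graph :: "'a set \<Rightarrow> 'a set set \<Rightarrow> bool" where
  "connected_graph V E \<longleftrightarrow> V \<noteq> {} \<and>
     (\<forall>u\<in>V. \<forall>w\<in>V. (\<lambda>x y. {x, y} \<in> E)\<^sup>*\<^sup>* u w)"

definition majority_colored :: "'a set set \<Rightarrow> ('a set \<Rightarrow> nat) \<Rightarrow> 'a \<Rightarrow> bool" where
  "majority_colored E c v \<longleftrightarrow>
     (\<forall>\<alpha>. {e \<in> incident E v. c e = \<alpha>} \<lesssim> {e \<in> incident E v. c e \<noteq> \<alpha>})"

definition edge_3_coloring :: "'a set set \<Rightarrow> ('a set \<Rightarrow> nat) \<Rightarrow> bool" where
  "edge_3_coloring E c \<longleftrightarrow> (\<forall>e\<in>E. c e \<in> {1, 2, 3})"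

end

theory Submission
  imports Defs "HOL-Analysis.Function_Topology"
begin

text \<open>The edges are covered by groups such that every edge lies in at most two of them: the
  edge sets of the vertices of \<open>F\<close> (finite, of size at least 4) and, for every vertex of
  infinite degree, infinitely many disjoint 4-element sets of its edges. We want a 3-coloring in
  which no color covers more than half of any group. At a vertex of \<open>F\<close> this is being
  majority colored; at a vertex of infinite degree every block contains an edge avoiding any
  given color, so the countably many edges of that color are outnumbered.

  By compactness it suffices to color finitely many groups, and these are the vertices of a finite
  multigraph (an edge lying in a single group gets a dummy second end). A coloring minimizing the
  energy \<open>\<Sum>\<^sub>v \<Sum>\<^sub>\<alpha> (number of \<alpha>-edges at v)\<^sup>2\<close>, with ties broken by the number of
  unbalanced vertices, is balanced: at an unbalanced vertex, swapping the two colors along a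
  maximal alternating (Kempe) trail, or recoloring a single edge, improves the coloring.\<close>

definition balanced :: "('e \<Rightarrow> nat) \<Rightarrow> 'e set \<Rightarrow> bool" where
  "balanced c A \<longleftrightarrow> (\<forall>a. 2 * card {x \<in> A. c x = a} \<le> card A)"

lemma three_colors:
  assumes "distinct [i, j, k]" "i < 3" "j < 3" "k < (3::nat)"
  shows "{i, j, k} = {..<3}"
  using assms by (intro card_subset_eq) auto

lemma other_two_colors:
  assumes "i < (3::nat)"
  obtains j k where "distinct [i, j, k]" "j < 3" "k < 3" "f j \<le> (f k :: nat)"
proof -
  have jk: "distinct [i, (i + 1) mod 3, (i + 2) mod 3]" "(i + 1) mod 3 < 3" "(i + 2) mod 3 < 3"
    using assms by auto presburger+
  show ?thesis
  proof (cases "f ((i + 1) mod 3) \<le> f ((i + 2) mod 3)")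
    case True
    then show ?thesis using jk that by blast
  next
    case False
    then show ?thesis using jk that[of "(i + 2) mod 3" "(i + 1) mod 3"] by auto
  qed
qed

section \<open>Kempe trails in finite multigraphs\<close>

locale finite_multigraph =
  fixes V :: "'n set" and E :: "'e set" and ends :: "'e \<Rightarrow> 'n set"
  assumes finite_V: "finite V" and finite_E: "finite E"
    and ends_subset: "\<And>x. x \<in> E \<Longrightarrow> ends x \<subseteq> V"
    and card_ends: "\<And>x. x \<in> E \<Longrightarrow> card (ends x) = 2"
begin

definition edges_at :: "'n \<Rightarrow> 'e set" where
  "edges_at w = {x \<in> E. w \<in> ends x}"

definition degree :: "'n \<Rightarrow> nat" where
  "degree w = card (edges_at w)"

definition color_count :: "('e \<Rightarrow> nat) \<Rightarrow> 'n \<Rightarrow> nat \<Rightarrow> nat" where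
  "color_count c w a = card {x \<in> edges_at w. c x = a}"

lemma finite_edges_at [simp]: "finite (edges_at w)"
  using finite_E by (simp add: edges_at_def)

lemma other_end:
  assumes "x \<in> E" "w \<in> ends x"
  obtains u where "u \<noteq> w" "ends x = {w, u}"
  using card_ends[OF assms(1)] assms(2) by (metis card_2_iff insert_commute insertE singletonD)

lemma balanced_edges_at:
  "balanced c (edges_at w) \<longleftrightarrow> (\<forall>a. 2 * color_count c w a \<le> degree w)"
  by (simp add: balanced_def color_count_def degree_def)

lemma color_count_eq_0: "\<forall>x. c x < 3 \<Longrightarrow> 3 \<le> g \<Longrightarrow> color_count c w g = 0"
  by (auto simp: color_count_def not_less[symmetric])

lemma balanced_iff_three_colors:
  assumes "\<forall>x. c x < 3" "distinct [i, j, k]" "i < 3" "j < 3" "k < 3"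
  shows "balanced c (edges_at w) \<longleftrightarrow> 2 * color_count c w i \<le> degree w \<and>
           2 * color_count c w j \<le> degree w \<and> 2 * color_count c w k \<le> degree w"
  using three_colors[OF assms(2-5)] color_count_eq_0[OF assms(1)]
  unfolding balanced_edges_at by (metis insertCI insertE lessThan_iff mult_0_right not_less
      singletonD zero_le)

lemma degree_eq_sum_color_counts:
  assumes "\<forall>x. c x < 3"
  shows "degree w = (\<Sum>a<3. color_count c w a)"
proof -
  have "edges_at w = (\<Union>a<3. {x \<in> edges_at w. c x = a})"
    using assms by auto
  also have "card \<dots> = (\<Sum>a<3. color_count c w a)"
    unfolding color_count_def by (rule card_UN_disjoint) auto
  finally show ?thesis
    unfolding degree_def .
qed

lemma degree_eq_color_counts:
  assumes "\<forall>x. c x < 3" "distinct [i, j, k]" "i < 3" "j < 3" "k < 3"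
  shows "degree w = color_count c w i + color_count c w j + color_count c w k"
  using degree_eq_sum_color_counts[OF assms(1), of w] assms(2)
  by (simp add: three_colors[OF assms(2-5), symmetric])

fun walk :: "'n \<Rightarrow> ('e \<times> 'n) list \<Rightarrow> bool" where
  "walk v [] \<longleftrightarrow> True"
| "walk v ((x, u) # p) \<longleftrightarrow> x \<in> E \<and> ends x = {v, u} \<and> walk u p"

definition walk_end :: "'n \<Rightarrow> ('e \<times> 'n) list \<Rightarrow> 'n" where
  "walk_end v p = last (v # map snd p)"

fun alternates :: "('e \<Rightarrow> nat) \<Rightarrow> nat \<Rightarrow> nat \<Rightarrow> ('e \<times> 'n) list \<Rightarrow> bool" where
  "alternates c a b [] \<longleftrightarrow> True"
| "alternates c a b ((x, u) # p) \<longleftrightarrow> c x = a \<and> alternates c b a p"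

definition kempe_trail :: "('e \<Rightarrow> nat) \<Rightarrow> nat \<Rightarrow> nat \<Rightarrow> 'n \<Rightarrow> ('e \<times> 'n) list \<Rightarrow> bool" where
  "kempe_trail c a b v p \<longleftrightarrow> walk v p \<and> distinct (map fst p) \<and> alternates c a b p"

definition kempe_swap :: "('e \<Rightarrow> nat) \<Rightarrow> nat \<Rightarrow> nat \<Rightarrow> ('e \<times> 'n) list \<Rightarrow> 'e \<Rightarrow> nat" where
  "kempe_swap c a b p x = (if x \<in> fst ` set p then (if c x = a then b else a) else c x)"

definition trail_count :: "('e \<Rightarrow> nat) \<Rightarrow> ('e \<times> 'n) list \<Rightarrow> 'n \<Rightarrow> nat \<Rightarrow> nat" where
  "trail_count c p w a = card {x \<in> fst ` set p. w \<in> ends x \<and> c x = a}"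

lemma walk_end_simps [simp]:
  "walk_end v [] = v"
  "walk_end v ((x, u) # p) = walk_end u p"
  "walk_end v (p @ [(y, z)]) = z"
  by (simp_all add: walk_end_def)

lemma walk_Cons_neq: "walk v ((x, u) # p) \<Longrightarrow> u \<noteq> v"
  using card_ends by fastforce

lemma walk_snoc:
  "walk v (p @ [(y, z)]) \<longleftrightarrow> walk v p \<and> y \<in> E \<and> ends y = {walk_end v p, z}"
  by (induction p arbitrary: v) auto

lemma alternates_snoc:
  "alternates c a b (p @ [(y, z)]) \<longleftrightarrow> alternates c a b p \<and> c y = (if even (length p) then a else b)"
  by (induction p arbitrary: a b) auto

lemma walk_edges: "walk v p \<Longrightarrow> fst ` set p \<subseteq> E"
  by (induction v p rule: walk.induct) auto

lemma walk_vertices: "walk v p \<Longrightarrow> p \<noteq> [] \<Longrightarrow> v \<in> V \<and> walk_end v p \<in> V"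
proof (induction v p rule: walk.induct)
  case (2 v x u p)
  then show ?case using ends_subset by (cases p) auto
qed simp

lemma alternates_colors: "alternates c a b p \<Longrightarrow> x \<in> fst ` set p \<Longrightarrow> c x = a \<or> c x = b"
  by (induction c a b p rule: alternates.induct) auto

lemma kempe_trail_Cons:
  "kempe_trail c a b v ((x, u) # p) \<longleftrightarrow>
     x \<in> E \<and> ends x = {v, u} \<and> c x = a \<and> x \<notin> fst ` set p \<and> kempe_trail c b a u p"
  by (auto simp: kempe_trail_def)

lemma kempe_trail_snoc:
  "kempe_trail c a b v (p @ [(y, z)]) \<longleftrightarrow>
     kempe_trail c a b v p \<and> y \<in> E \<and> ends y = {walk_end v p, z} \<and> y \<notin> fst ` set p \<and>
     c y = (if even (length p) then a else b)"
  by (auto simp: kempe_trail_def walk_snoc alternates_snoc)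

lemma kempe_trail_single:
  "x \<in> E \<Longrightarrow> ends x = {v, u} \<Longrightarrow> c x = a \<Longrightarrow> kempe_trail c a b v [(x, u)]"
  by (simp add: kempe_trail_def)

lemma kempe_trail_length: "kempe_trail c a b v p \<Longrightarrow> length p \<le> card E"
  unfolding kempe_trail_def
  by (metis card_mono distinct_card finite_E length_map list.set_map walk_edges)

lemma kempe_swap_single: "c x = a \<Longrightarrow> kempe_swap c a b [(x, u)] = c(x := b)"
  by (auto simp: kempe_swap_def)

lemma kempe_swap_colors: "\<forall>x. c x < 3 \<Longrightarrow> a < 3 \<Longrightarrow> b < 3 \<Longrightarrow> \<forall>x. kempe_swap c a b p x < 3"
  by (simp add: kempe_swap_def)

text \<open>Each inner visit of a trail uses one edge of either color, so only its two ends are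
  unbalanced.\<close>

lemma trail_count_excess:
  assumes "kempe_trail c a b v p" "a \<noteq> b"
  shows "int (trail_count c p w a) - int (trail_count c p w b) =
           of_bool (w = v) - of_bool (w = walk_end v p) * (-1) ^ length p"
  using assms
proof (induction p arbitrary: v a b)
  case Nil
  then show ?case by (simp add: trail_count_def)
next
  case (Cons q p)
  obtain x u where q: "q = (x, u)" by fastforce
  have x: "ends x = {v, u}" "c x = a" "x \<notin> fst ` set p" "u \<noteq> v"
    using Cons.prems walk_Cons_neq by (auto simp: q kempe_trail_def)
  have count_Cons:
      "trail_count c (q # p) w g = of_bool (w \<in> ends x \<and> c x = g) + trail_count c p w g" for g
  proof -
    have "{y \<in> fst ` set (q # p). w \<in> ends y \<and> c y = g} =
          (if w \<in> ends x \<and> c x = g then insert x else id) {y \<in> fst ` set p. w \<in> ends y \<and> c y = g}"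
      by (auto simp: q)
    then show ?thesis
      unfolding trail_count_def using x(3) by simp
  qed
  have IH: "int (trail_count c p w b) - int (trail_count c p w a) =
          of_bool (w = u) - of_bool (w = walk_end u p) * (-1) ^ length p"
    using Cons by (simp add: q kempe_trail_Cons)
  have "trail_count c (q # p) w a = of_bool (w = v) + of_bool (w = u) + trail_count c p w a"
    using count_Cons[of a] x by auto
  moreover have "trail_count c (q # p) w b = trail_count c p w b"
    using count_Cons[of b] x Cons.prems(2) by simp
  ultimately show ?case
    using IH by (simp add: q)
qed

lemma trail_count_le: "walk v p \<Longrightarrow> trail_count c p w a \<le> color_count c w a"
  unfolding trail_count_def color_count_def edges_at_def
  using walk_edges[of v p] finite_E by (intro card_mono) auto

lemma color_count_kempe_swap:
  fixes w :: 'n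
  assumes "kempe_trail c a b v p" "a \<noteq> b"
  defines "\<delta> \<equiv> of_bool (w = v) - of_bool (w = walk_end v p) * (-1) ^ length p :: int"
  shows "int (color_count (kempe_swap c a b p) w a) = int (color_count c w a) - \<delta>"
    and "int (color_count (kempe_swap c a b p) w b) = int (color_count c w b) + \<delta>"
    and "g \<noteq> a \<Longrightarrow> g \<noteq> b \<Longrightarrow> color_count (kempe_swap c a b p) w g = color_count c w g"
proof -
  define T where "T = fst ` set p"
  have T: "T \<subseteq> E" "\<And>x. x \<in> T \<Longrightarrow> c x = a \<or> c x = b"
    using assms(1) walk_edges alternates_colors unfolding T_def kempe_trail_def by blast+
  have "finite T" using T(1) finite_E by (rule finite_subset)
  have count: "color_count c' w g =
      card {x \<in> edges_at w - T. c x = g} + card {x \<in> T. w \<in> ends x \<and> c' x = g}"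
    if "\<And>x. x \<notin> T \<Longrightarrow> c' x = c x" for c' g
  proof -
    have "color_count c' w g =
        card ({x \<in> edges_at w - T. c x = g} \<union> {x \<in> T. w \<in> ends x \<and> c' x = g})"
      unfolding color_count_def using that T(1)
      by (intro arg_cong[where f = card]) (auto simp: edges_at_def)
    also have "\<dots> = card {x \<in> edges_at w - T. c x = g} + card {x \<in> T. w \<in> ends x \<and> c' x = g}"
      using \<open>finite T\<close> by (intro card_Un_disjoint) auto
    finally show ?thesis .
  qed
  have swap_out: "x \<notin> T \<Longrightarrow> kempe_swap c a b p x = c x" for x
    by (simp add: kempe_swap_def T_def)
  have swap_in: "{x \<in> T. w \<in> ends x \<and> kempe_swap c a b p x = g} =
      {x \<in> T. w \<in> ends x \<and> c x = (if g = a then b else if g = b then a else g)}" for g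
    using T(2) assms(2) by (auto simp: kempe_swap_def T_def)
  have excess: "int (trail_count c p w a) - int (trail_count c p w b) = \<delta>"
    unfolding \<delta>_def by (rule trail_count_excess[OF assms(1,2)])
  show "int (color_count (kempe_swap c a b p) w a) = int (color_count c w a) - \<delta>"
    using count[OF swap_out, of a] count[of c a] swap_in[of a] excess
    by (simp add: trail_count_def T_def)
  show "int (color_count (kempe_swap c a b p) w b) = int (color_count c w b) + \<delta>"
    using count[OF swap_out, of b] count[of c b] swap_in[of b] excess assms(2)
    by (simp add: trail_count_def T_def)
  show "color_count (kempe_swap c a b p) w g = color_count c w g" if "g \<noteq> a" "g \<noteq> b"
    using count[OF swap_out, of g] count[of c g] swap_in[of g] that by simp
qed

definition maximal_kempe_trail :: "('e \<Rightarrow> nat) \<Rightarrow> nat \<Rightarrow> nat \<Rightarrow> 'n \<Rightarrow> ('e \<times> 'n) list \<Rightarrow> bool" where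
  "maximal_kempe_trail c a b v p \<longleftrightarrow> kempe_trail c a b v p \<and>
     (\<forall>y\<in>edges_at (walk_end v p). c y = (if even (length p) then a else b) \<longrightarrow> y \<in> fst ` set p)"

lemma maximal_kempe_trail_exists:
  assumes "kempe_trail c a b v p0"
  obtains p where "maximal_kempe_trail c a b v (p0 @ p)"
proof -
  have "\<exists>p. kempe_trail c a b v (p0 @ p) \<and> (\<forall>q. kempe_trail c a b v (p0 @ q) \<longrightarrow> length q \<le> length p)"
    using assms by (intro ex_has_greatest_nat[where k = "[]" and b = "card E + 1"])
      (auto dest: kempe_trail_length)
  then obtain p where p: "kempe_trail c a b v (p0 @ p)"
    and longest: "\<And>q. kempe_trail c a b v (p0 @ q) \<Longrightarrow> length q \<le> length p"
    by blast
  have "y \<in> fst ` set (p0 @ p)"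
    if y: "y \<in> edges_at (walk_end v (p0 @ p))" "c y = (if even (length (p0 @ p)) then a else b)"
        for y
  proof (rule ccontr)
    assume "y \<notin> fst ` set (p0 @ p)"
    moreover have "y \<in> E" "walk_end v (p0 @ p) \<in> ends y"
      using y(1) by (auto simp: edges_at_def)
    moreover obtain z where "z \<noteq> walk_end v (p0 @ p)" "ends y = {walk_end v (p0 @ p), z}"
      using calculation(2,3) by (rule other_end)
    ultimately have "kempe_trail c a b v ((p0 @ p) @ [(y, z)])"
      unfolding kempe_trail_snoc using p y(2) by blast
    then show False using longest[of "p @ [(y, z)]"] by simp
  qed
  then have "maximal_kempe_trail c a b v (p0 @ p)"
    using p unfolding maximal_kempe_trail_def by blast
  then show ?thesis by (rule that)
qed

lemma maximal_kempe_trail_end_counts: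
  assumes "maximal_kempe_trail c a b v p" "a \<noteq> b"
  defines "l \<equiv> walk_end v p"
  shows "even (length p) \<Longrightarrow>
           int (color_count c l a) \<le> int (color_count c l b) + of_bool (l = v) - 1"
    and "odd (length p) \<Longrightarrow>
           int (color_count c l b) \<le> int (color_count c l a) - of_bool (l = v) - 1"
proof -
  have trail: "kempe_trail c a b v p" and walk: "walk v p"
    using assms(1) by (simp_all add: maximal_kempe_trail_def kempe_trail_def)
  have saturated_count: "color_count c l g = trail_count c p l g"
    if "g = (if even (length p) then a else b)" for g
  proof -
    have "{x \<in> edges_at l. c x = g} \<subseteq> {x \<in> fst ` set p. l \<in> ends x \<and> c x = g}"
      using assms(1) that by (auto simp: l_def edges_at_def maximal_kempe_trail_def)
    then have "color_count c l g \<le> trail_count c p l g"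
      unfolding color_count_def trail_count_def by (intro card_mono) auto
    then show ?thesis using trail_count_le[OF walk] by (simp add: le_antisym)
  qed
  have excess:
      "int (trail_count c p l a) - int (trail_count c p l b) = of_bool (l = v) - (-1) ^ length p"
    using trail_count_excess[OF trail assms(2), of l] by (simp add: l_def)
  show "int (color_count c l a) \<le> int (color_count c l b) + of_bool (l = v) - 1"
    if "even (length p)"
    using that excess saturated_count[of a] trail_count_le[OF walk, of c l b] by simp
  show "int (color_count c l b) \<le> int (color_count c l a) - of_bool (l = v) - 1"
    if "odd (length p)"
    using that excess saturated_count[of b] trail_count_le[OF walk, of c l a] by simp
qed

section \<open>Energy-minimal colorings are balanced\<close>

definition local_energy :: "('e \<Rightarrow> nat) \<Rightarrow> 'n \<Rightarrow> nat" where
  "local_energy c w = (\<Sum>a<3. color_count c w a ^ 2)"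

definition energy :: "('e \<Rightarrow> nat) \<Rightarrow> nat" where
  "energy c = (\<Sum>w\<in>V. local_energy c w)"

text \<open>The change of \<open>local_energy c w\<close> when one edge at \<open>w\<close> changes from color \<open>a\<close> to \<open>b\<close>.\<close>

definition recolor_cost :: "('e \<Rightarrow> nat) \<Rightarrow> 'n \<Rightarrow> nat \<Rightarrow> nat \<Rightarrow> int" where
  "recolor_cost c w a b = 2 * (int (color_count c w b) - int (color_count c w a) + 1)"

lemma local_energy_kempe_swap:
  fixes w :: 'n
  assumes "kempe_trail c a b v p" "a \<noteq> b" "a < 3" "b < 3"
  defines "\<delta> \<equiv> of_bool (w = v) - of_bool (w = walk_end v p) * (-1) ^ length p :: int"
  shows "int (local_energy (kempe_swap c a b p) w) =
           int (local_energy c w) + 2 * \<delta> * (int (color_count c w b) - int (color_count c w a) + \<delta>)"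
proof -
  have split: "(\<Sum>g<3. f g) = f a + f b + (\<Sum>g\<in>{..<3} - {a} - {b}. f g)" for f :: "nat \<Rightarrow> nat"
    using assms(2-4) by (simp add: sum.remove[of "{..<3}" a] sum.remove[of "{..<3} - {a}" b])
  have rest: "(\<Sum>g\<in>{..<3} - {a} - {b}. color_count (kempe_swap c a b p) w g ^ 2) =
      (\<Sum>g\<in>{..<3} - {a} - {b}. color_count c w g ^ 2)"
    using color_count_kempe_swap(3)[OF assms(1,2)] by (intro sum.cong) auto
  define R where "R = (\<Sum>g\<in>{..<3} - {a} - {b}. color_count c w g ^ 2)"
  have "int (local_energy (kempe_swap c a b p) w) =
      int (color_count (kempe_swap c a b p) w a) ^ 2 +
      int (color_count (kempe_swap c a b p) w b) ^ 2 + int R"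
    unfolding local_energy_def split rest R_def by simp
  also have "\<dots> = (int (color_count c w a) - \<delta>) ^ 2 + (int (color_count c w b) + \<delta>) ^ 2 + int R"
    using color_count_kempe_swap(1,2)[OF assms(1,2), of w] by (simp add: \<delta>_def)
  also have "\<dots> = int (local_energy c w) +
      2 * \<delta> * (int (color_count c w b) - int (color_count c w a) + \<delta>)"
    unfolding local_energy_def split R_def by (simp add: power2_eq_square algebra_simps)
  finally show ?thesis .
qed

lemma energy_kempe_swap:
  assumes "kempe_trail c a b v p" "a \<noteq> b" "a < 3" "b < 3" "walk_end v p \<noteq> v"
  defines "l \<equiv> walk_end v p"
  shows "int (energy (kempe_swap c a b p)) = int (energy c) + recolor_cost c v a b +
           (if even (length p) then recolor_cost c l b a else recolor_cost c l a b)"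
proof -
  have "p \<noteq> []" using assms(5) by auto
  then have "v \<in> V" "l \<in> V"
    using walk_vertices assms(1) by (auto simp: kempe_trail_def l_def)
  have local_change: "int (local_energy (kempe_swap c a b p) w) - int (local_energy c w) =
      (if w = v then recolor_cost c v a b else 0) +
      (if w = l then if even (length p) then recolor_cost c l b a else recolor_cost c l a b
       else 0)"
    for w
  proof -
    have "l \<noteq> v" using assms(5) by (simp add: l_def)
    then consider "w = v" | "w = l" "even (length p)" | "w = l" "odd (length p)" | "w \<noteq> v" "w \<noteq> l"
      by blast
    then show ?thesis
      using local_energy_kempe_swap[OF assms(1-4), of w] \<open>l \<noteq> v\<close>
      by cases (simp_all add: recolor_cost_def l_def[symmetric] algebra_simps)
  qed
  have "int (energy (kempe_swap c a b p)) - int (energy c) =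
      (\<Sum>w\<in>V. int (local_energy (kempe_swap c a b p) w) - int (local_energy c w))"
    unfolding energy_def by (simp add: sum_subtractf)
  also have "\<dots> = (\<Sum>w\<in>V. (if w = v then recolor_cost c v a b else 0) +
        (if w = l then if even (length p) then recolor_cost c l b a else recolor_cost c l a b
         else 0))"
    unfolding local_change ..
  also have "\<dots> = recolor_cost c v a b +
      (if even (length p) then recolor_cost c l b a else recolor_cost c l a b)"
    using finite_V \<open>v \<in> V\<close> \<open>l \<in> V\<close> by (simp add: sum.distrib)
  finally show ?thesis by simp
qed

lemma energy_maximal_kempe_swap:
  assumes "maximal_kempe_trail c a b v p" "a \<noteq> b" "a < 3" "b < 3" "walk_end v p \<noteq> v"
  shows "int (energy (kempe_swap c a b p)) \<le> int (energy c) + recolor_cost c v a b"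
proof -
  have "kempe_trail c a b v p"
    using assms(1) by (simp add: maximal_kempe_trail_def)
  moreover have "(if even (length p) then recolor_cost c (walk_end v p) b a
                  else recolor_cost c (walk_end v p) a b) \<le> 0"
    using maximal_kempe_trail_end_counts[OF assms(1,2)] assms(5) by (auto simp: recolor_cost_def)
  ultimately show ?thesis
    using energy_kempe_swap[OF _ assms(2-5)] by fastforce
qed

lemma energy_recolor_edge:
  assumes "x \<in> E" "ends x = {v, u}" "u \<noteq> v" "c x = a" "a \<noteq> b" "a < 3" "b < 3"
  shows "int (energy (c(x := b))) = int (energy c) + recolor_cost c v a b + recolor_cost c u a b"
  using energy_kempe_swap[OF kempe_trail_single[of x v u c a b, OF assms(1,2,4)] assms(5-7)]
      assms(3,4)
  by (simp add: kempe_swap_single)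

lemma color_count_recolor_edge:
  assumes "x \<in> E" "ends x = {v, u}" "u \<noteq> v" "c x = a" "a \<noteq> b"
  shows "int (color_count (c(x := b)) w a) =
           int (color_count c w a) - of_bool (w = v) - of_bool (w = u)"
    and "int (color_count (c(x := b)) w b) =
           int (color_count c w b) + of_bool (w = v) + of_bool (w = u)"
    and "g \<noteq> a \<Longrightarrow> g \<noteq> b \<Longrightarrow> color_count (c(x := b)) w g = color_count c w g"
  using color_count_kempe_swap[OF kempe_trail_single[of x v u c a b, OF assms(1,2,4)] assms(5),
      where w = w]
  using assms(4) by (simp_all add: kempe_swap_single)

context
  fixes S :: "'n set"
  assumes S_subset: "S \<subseteq> V" and degree_S: "\<And>w. w \<in> S \<Longrightarrow> 4 \<le> degree w"
begin

definition unbalanced :: "('e \<Rightarrow> nat) \<Rightarrow> 'n set" where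
  "unbalanced c = {w \<in> S. \<not> balanced c (edges_at w)}"

definition improves :: "('e \<Rightarrow> nat) \<Rightarrow> ('e \<Rightarrow> nat) \<Rightarrow> bool" where
  "improves c' c \<longleftrightarrow> energy c' < energy c \<or> energy c' = energy c \<and> unbalanced c' \<subset> unbalanced c"

lemma dominant_color:
  assumes c: "\<forall>x. c x < 3" and n: "n \<in> unbalanced c"
  obtains i j k where "distinct [i, j, k]" "i < 3" "j < 3" "k < 3"
    "color_count c n j + 2 \<le> color_count c n i" "color_count c n j \<le> color_count c n k"
    "color_count c n i = color_count c n j + 2 \<Longrightarrow>
       color_count c n i = 3 \<and> color_count c n j = 1 \<and> color_count c n k = 1"
proof -
  obtain i where i: "degree n < 2 * color_count c n i" and "n \<in> S"
    using n by (auto simp: unbalanced_def balanced_edges_at not_le)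
  then have "i < 3" using color_count_eq_0[OF c] by (metis mult_0_right not_less not_less_zero)
  then obtain j k where jk: "distinct [i, j, k]" "j < 3" "k < 3"
    "color_count c n j \<le> color_count c n k"
    by (rule other_two_colors)
  have "degree n = color_count c n i + color_count c n j + color_count c n k"
    using degree_eq_color_counts[OF c jk(1) \<open>i < 3\<close> jk(2,3)] .
  then show ?thesis
    using that[OF jk(1) \<open>i < 3\<close> jk(2,3)] i jk(4) degree_S[OF \<open>n \<in> S\<close>] by linarith
qed

lemma unbalanced_recolor_degenerate:
  assumes c: "\<forall>x. c x < 3" and ijk: "distinct [i, j, k]" "i < 3" "j < 3" "k < 3"
    and e: "e \<in> E" "ends e = {n, u}" "u \<noteq> n" "c e = i" and "n \<in> S"
    and at_n: "color_count c n i = 3" "color_count c n j = 1" "color_count c n k = 1"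
    and at_u: "color_count c u i = color_count c u j" "color_count c u i \<le> color_count c u k"
  shows "unbalanced (c(e := j)) \<subset> unbalanced c"
proof -
  define c' where "c' = c(e := j)"
  have c': "\<forall>x. c' x < 3" using c ijk by (simp add: c'_def)
  have ij: "i \<noteq> j" "k \<noteq> i" "k \<noteq> j" using ijk(1) by auto
  note counts = color_count_recolor_edge[of e n u c i j, OF e ij(1), folded c'_def]
  note balanced_c = balanced_iff_three_colors[OF c ijk]
  note balanced_c' = balanced_iff_three_colors[OF c' ijk]
  have degree_n: "degree n = 5"
    using degree_eq_color_counts[OF c ijk] at_n by simp
  have "n \<in> unbalanced c"
    using \<open>n \<in> S\<close> degree_n at_n by (simp add: unbalanced_def balanced_c)
  moreover have "n \<notin> unbalanced c'"
    using degree_n at_n counts(1,2)[of n] counts(3)[OF ij(2,3), of n] e(3)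
    by (simp add: unbalanced_def balanced_c')
  moreover have "w \<in> unbalanced c" if w: "w \<in> unbalanced c'" for w
  proof (cases "w = u")
    case True
    have "4 \<le> degree u" "degree u = color_count c u i + color_count c u j + color_count c u k"
      using w True degree_S degree_eq_color_counts[OF c ijk] by (auto simp: unbalanced_def)
    moreover have "\<not> (2 * color_count c' u i \<le> degree u \<and> 2 * color_count c' u j \<le> degree u \<and>
        2 * color_count c' u k \<le> degree u)"
      using w True by (simp add: unbalanced_def balanced_c')
    ultimately have "degree u < 2 * color_count c u k"
      using at_u counts(1,2)[of u] counts(3)[OF ij(2,3), of u] e(3) by auto
    then show ?thesis
      using w True by (auto simp: unbalanced_def balanced_edges_at not_le)
  next
    case False
    then have "w \<noteq> n" using w \<open>n \<notin> unbalanced c'\<close> by blast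
    then have "color_count c' w g = color_count c w g" for g
      using False counts[where w = w] by (cases "g = i \<or> g = j") auto
    then show ?thesis using w by (simp add: unbalanced_def balanced_edges_at)
  qed
  ultimately show ?thesis unfolding c'_def by blast
qed

text \<open>Either recoloring \<open>e\<close> to \<open>k\<close> lowers the energy, or recoloring it to \<open>j\<close> keeps the
  energy and balances \<open>n\<close> without unbalancing \<open>u\<close>.\<close>

lemma exists_improvement_degenerate:
  assumes c: "\<forall>x. c x < 3" and ijk: "distinct [i, j, k]" "i < 3" "j < 3" "k < 3"
    and e: "e \<in> E" "ends e = {n, u}" "u \<noteq> n" "c e = i" and "n \<in> S"
    and at_n: "color_count c n i = 3" "color_count c n j = 1" "color_count c n k = 1"
    and at_u: "color_count c u i = color_count c u j"
  shows "\<exists>c'. (\<forall>x. c' x < 3) \<and> improves c' c"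
proof (cases "color_count c u k < color_count c u i")
  case True
  have "int (energy (c(e := k))) = int (energy c) + recolor_cost c n i k + recolor_cost c u i k"
    using ijk e by (intro energy_recolor_edge) auto
  then have "energy (c(e := k)) < energy c"
    using True at_n by (simp add: recolor_cost_def)
  then show ?thesis
    using c ijk by (intro exI[of _ "c(e := k)"]) (auto simp: improves_def)
next
  case False
  have "int (energy (c(e := j))) = int (energy c) + recolor_cost c n i j + recolor_cost c u i j"
    using ijk e by (intro energy_recolor_edge) auto
  then have "energy (c(e := j)) = energy c"
    using at_n at_u by (simp add: recolor_cost_def)
  moreover have "unbalanced (c(e := j)) \<subset> unbalanced c"
    using False by (intro unbalanced_recolor_degenerate[OF c ijk e \<open>n \<in> S\<close> at_n at_u]) simp
  ultimately show ?thesis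
    using c ijk by (intro exI[of _ "c(e := j)"]) (auto simp: improves_def)
qed

text \<open>If the maximal trail returns to \<open>n\<close>, recoloring its first edge and swapping the rest of it
  change the energy at \<open>u\<close> by amounts summing to 4, which is outweighed at \<open>n\<close> unless
  \<open>n\<close> has color counts \<open>(3, 1, 1)\<close>.\<close>

lemma exists_improvement_closed_trail:
  assumes c: "\<forall>x. c x < 3" and ijk: "distinct [i, j, k]" "i < 3" "j < 3" "k < 3" and "n \<in> S"
    and counts: "color_count c n j + 2 \<le> color_count c n i"
      "color_count c n i = color_count c n j + 2 \<Longrightarrow>
         color_count c n i = 3 \<and> color_count c n j = 1 \<and> color_count c n k = 1"
    and trail: "maximal_kempe_trail c i j n ((e, u) # p)" and closed: "walk_end u p = n"
  shows "\<exists>c'. (\<forall>x. c' x < 3) \<and> improves c' c"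
proof -
  have e: "e \<in> E" "ends e = {n, u}" "c e = i" "u \<noteq> n" and p: "kempe_trail c j i u p"
    using trail walk_Cons_neq[of n e u p]
    by (auto simp: maximal_kempe_trail_def kempe_trail_Cons kempe_trail_def)
  have "i \<noteq> j" using ijk(1) by simp
  have "odd (length ((e, u) # p))"
  proof
    assume "even (length ((e, u) # p))"
    then have "int (color_count c n i) \<le> int (color_count c n j)"
      using maximal_kempe_trail_end_counts(1)[OF trail \<open>i \<noteq> j\<close>] closed by simp
    then show False using counts(1) by simp
  qed
  then have "even (length p)" by simp
  have first:
      "int (energy (c(e := j))) = int (energy c) + recolor_cost c n i j + recolor_cost c u i j"
    using e \<open>i \<noteq> j\<close> ijk by (intro energy_recolor_edge) auto
  have rest: "int (energy (kempe_swap c j i p)) = int (energy c) + recolor_cost c u j i +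
      recolor_cost c n i j"
    using energy_kempe_swap[OF p] closed e(4) \<open>even (length p)\<close> \<open>i \<noteq> j\<close> ijk by simp
  consider "energy (c(e := j)) < energy c" | "energy (kempe_swap c j i p) < energy c"
    | "energy c \<le> energy (c(e := j))" "energy c \<le> energy (kempe_swap c j i p)"
    by linarith
  then show ?thesis
  proof cases
    case 1
    then show ?thesis using c ijk by (intro exI[of _ "c(e := j)"]) (simp add: improves_def)
  next
    case 2
    then show ?thesis
      using kempe_swap_colors[OF c ijk(3,2)] by (auto simp: improves_def)
  next
    case 3
    then have "color_count c n i = color_count c n j + 2" "color_count c u i = color_count c u j"
      using first rest counts(1) by (simp_all add: recolor_cost_def)
    then show ?thesis
      using counts(2) by (intro exists_improvement_degenerate[OF c ijk e(1,2,4,3) \<open>n \<in> S\<close>]) auto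
  qed
qed

lemma exists_improvement:
  assumes c: "\<forall>x. c x < 3" and n: "n \<in> unbalanced c"
  shows "\<exists>c'. (\<forall>x. c' x < 3) \<and> improves c' c"
proof -
  obtain i j k where ijk: "distinct [i, j, k]" "i < 3" "j < 3" "k < 3"
    and counts: "color_count c n j + 2 \<le> color_count c n i"
      "color_count c n i = color_count c n j + 2 \<Longrightarrow>
         color_count c n i = 3 \<and> color_count c n j = 1 \<and> color_count c n k = 1"
    using dominant_color[OF c n] by metis
  have "n \<in> S" using n by (simp add: unbalanced_def)
  have "0 < color_count c n i" using counts(1) by linarith
  then obtain e where e: "e \<in> E" "n \<in> ends e" "c e = i"
    by (auto simp: color_count_def edges_at_def card_gt_0_iff)
  obtain u where u: "u \<noteq> n" "ends e = {n, u}" using e(1,2) by (rule other_end)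
  have "kempe_trail c i j n [(e, u)]"
    using e u by (intro kempe_trail_single) auto
  then obtain p where trail: "maximal_kempe_trail c i j n ((e, u) # p)"
    by (metis append_Cons append_Nil maximal_kempe_trail_exists)
  show ?thesis
  proof (cases "walk_end u p = n")
    case True
    then show ?thesis using exists_improvement_closed_trail[OF c ijk \<open>n \<in> S\<close> counts trail] by blast
  next
    case False
    have "i \<noteq> j" using ijk(1) by simp
    then have "int (energy (kempe_swap c i j ((e, u) # p))) \<le> int (energy c) + recolor_cost c n i j"
      using energy_maximal_kempe_swap[OF trail] False ijk by simp
    then have "energy (kempe_swap c i j ((e, u) # p)) < energy c"
      using counts(1) by (simp add: recolor_cost_def)
    then show ?thesis
      using kempe_swap_colors[OF c ijk(2,3)] by (auto simp: improves_def)
  qed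
qed

theorem exists_balanced_coloring: "\<exists>c. (\<forall>x. c x < 3) \<and> (\<forall>w\<in>S. balanced c (edges_at w))"
proof -
  have "finite S" using S_subset finite_V by (rule finite_subset)
  have "(c', c) \<in> inv_image (less_than <*lex*> less_than) (\<lambda>c. (energy c, card (unbalanced c)))"
    if "improves c' c" for c' c
  proof (cases "energy c' < energy c")
    case False
    then have "energy c' = energy c" "unbalanced c' \<subset> unbalanced c"
      using that by (auto simp: improves_def)
    moreover have "finite (unbalanced c)"
      using \<open>finite S\<close> by (auto simp: unbalanced_def)
    ultimately show ?thesis by (simp add: psubset_card_mono)
  qed simp
  then have "{(c', c). improves c' c} \<subseteq>
      inv_image (less_than <*lex*> less_than) (\<lambda>c. (energy c, card (unbalanced c)))"
    by auto
  then have "wf {(c', c). improves c' c}"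
    by (rule wf_subset[OF wf_inv_image[OF wf_lex_prod[OF wf_less_than wf_less_than]]])
  then obtain c where c: "\<forall>x. c x < 3"
    and minimal: "\<And>c'. improves c' c \<Longrightarrow> \<not> (\<forall>x. c' x < 3)"
    by (rule wfE_min[where x = "\<lambda>_. 0" and Q = "{c. \<forall>x. c x < 3}"]) auto
  have "unbalanced c = {}"
    using exists_improvement[OF c] minimal by blast
  then show ?thesis using c by (auto simp: unbalanced_def)
qed

end

end

section \<open>Balanced colorings of set families\<close>

lemma balanced_coloring_finite_family:
  fixes G :: "'e set set"
  assumes "finite G" and G: "\<And>g. g \<in> G \<Longrightarrow> finite g \<and> 4 \<le> card g"
    and two: "\<And>x. card {g \<in> G. x \<in> g} \<le> 2"
  shows "\<exists>c. (\<forall>x. c x < 3) \<and> (\<forall>g\<in>G. balanced c g)"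
proof -
  \<comment> \<open>The groups are the vertices; an element of a single group gets the extra end \<open>None\<close>.\<close>
  define ends where
    "ends x = Some ` {g \<in> G. x \<in> g} \<union> (if card {g \<in> G. x \<in> g} = 1 then {None} else {})" for x
  interpret finite_multigraph "insert None (Some ` G)" "\<Union>G" ends
  proof
    show "finite (insert None (Some ` G))" "finite (\<Union>G)"
      using \<open>finite G\<close> G by auto
    show "ends x \<subseteq> insert None (Some ` G)" for x
      by (auto simp: ends_def)
    show "card (ends x) = 2" if "x \<in> \<Union>G" for x
    proof -
      have "finite {g \<in> G. x \<in> g}" "{g \<in> G. x \<in> g} \<noteq> {}"
        using \<open>finite G\<close> that by auto
      then have "0 < card {g \<in> G. x \<in> g}" by (simp add: card_gt_0_iff)
      then have "card {g \<in> G. x \<in> g} = 1 \<or> card {g \<in> G. x \<in> g} = 2"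
        using two[of x] by linarith
      then show ?thesis
        using \<open>finite {g \<in> G. x \<in> g}\<close> by (auto simp: ends_def card_image)
    qed
  qed
  have edges_at_Some: "edges_at (Some g) = g" if "g \<in> G" for g
    using that by (auto simp: edges_at_def ends_def)
  have "4 \<le> degree w" if "w \<in> Some ` G" for w
    using that G by (auto simp: degree_def edges_at_Some)
  then obtain c where "\<forall>x. c x < 3" "\<forall>w\<in>Some ` G. balanced c (edges_at w)"
    using exists_balanced_coloring[of "Some ` G"] by blast
  then show ?thesis by (auto simp: edges_at_Some)
qed

lemma closedin_finitely_determined:
  fixes P :: "('e \<Rightarrow> 'k) \<Rightarrow> bool" and K :: "'k set"
  assumes "finite D" and determined: "\<And>c c'. \<forall>x\<in>D. c x = c' x \<Longrightarrow> P c \<Longrightarrow> P c'"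
  defines "X \<equiv> product_topology (\<lambda>_::'e. discrete_topology K) UNIV"
  shows "closedin X {c \<in> topspace X. P c}"
proof -
  have topX: "topspace X = {c. range c \<subseteq> K}"
    by (auto simp: X_def PiE_UNIV_domain)
  have projection: "continuous_map X (discrete_topology K) (\<lambda>c. c x)" for x
    unfolding X_def
    using continuous_map_product_projection[of x UNIV "\<lambda>_. discrete_topology K"] by simp
  have "openin X (topspace X - {c \<in> topspace X. P c})"
  proof (subst openin_subopen, intro ballI)
    fix c assume c: "c \<in> topspace X - {c \<in> topspace X. P c}"
    define N where "N = (\<Inter>x\<in>D. {c' \<in> topspace X. c' x \<in> {c x}}) \<inter> topspace X"
    have "openin X N"
      unfolding N_def using \<open>finite D\<close> c
      by (intro openin_INT openin_continuous_map_preimage[OF projection]) (auto simp: topX)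
    moreover have "N \<subseteq> topspace X - {c \<in> topspace X. P c}"
      using c determined[of _ c] by (auto simp: N_def)
    ultimately show "\<exists>T. openin X T \<and> c \<in> T \<and> T \<subseteq> topspace X - {c \<in> topspace X. P c}"
      using c by (auto simp: N_def)
  qed
  then show ?thesis by (auto simp: closedin_def)
qed

lemma compactness_finite_colors:
  fixes P :: "'j \<Rightarrow> ('e \<Rightarrow> 'k) \<Rightarrow> bool" and D :: "'j \<Rightarrow> 'e set"
  assumes "finite K"
    and finite_support: "\<And>j. j \<in> J \<Longrightarrow> finite (D j)"
    and determined: "\<And>j c c'. j \<in> J \<Longrightarrow> \<forall>x\<in>D j. c x = c' x \<Longrightarrow> P j c \<Longrightarrow> P j c'"
    and finitely_satisfiable:
      "\<And>J0. finite J0 \<Longrightarrow> J0 \<subseteq> J \<Longrightarrow> \<exists>c. range c \<subseteq> K \<and> (\<forall>j\<in>J0. P j c)"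
  shows "\<exists>c. range c \<subseteq> K \<and> (\<forall>j\<in>J. P j c)"
proof (cases "J = {}")
  case True
  then show ?thesis using finitely_satisfiable[of "{}"] by auto
next
  case False
  define X where "X = product_topology (\<lambda>_::'e. discrete_topology K) UNIV"
  define C where "C j = {c \<in> topspace X. P j c}" for j
  have topX: "topspace X = {c. range c \<subseteq> K}"
    by (auto simp: X_def PiE_UNIV_domain)
  have "compact_space X"
    unfolding X_def using \<open>finite K\<close>
    by (simp add: compact_space_product_topology compact_space_discrete_topology)
  moreover have "closedin X (C j)" if "j \<in> J" for j
    unfolding C_def X_def using finite_support[OF that] determined[OF that]
    by (rule closedin_finitely_determined)
  moreover have "\<Inter>(C ` J0) \<noteq> {}" if J0: "finite J0" "J0 \<subseteq> J" for J0
  proof -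
    obtain c where "range c \<subseteq> K" "\<forall>j\<in>J0. P j c"
      using finitely_satisfiable[OF J0] by blast
    then have "c \<in> \<Inter>(C ` J0)" by (simp add: C_def topX)
    then show ?thesis by blast
  qed
  ultimately have "\<Inter>(C ` J) \<noteq> {}"
    unfolding compact_space_fip by (simp add: all_finite_subset_image)
  then obtain c where "\<forall>j\<in>J. c \<in> C j" by blast
  then have "range c \<subseteq> K" "\<forall>j\<in>J. P j c"
    using False by (auto simp: C_def topX)
  then show ?thesis by blast
qed

lemma balanced_coloring_family:
  fixes G :: "'e set set"
  assumes G: "\<And>g. g \<in> G \<Longrightarrow> finite g \<and> 4 \<le> card g"
    and two: "\<And>x. finite {g \<in> G. x \<in> g} \<and> card {g \<in> G. x \<in> g} \<le> 2"
  shows "\<exists>c. (\<forall>x. c x < 3) \<and> (\<forall>g\<in>G. balanced c g)"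
proof -
  have "\<exists>c. range c \<subseteq> {..<3} \<and> (\<forall>g\<in>G. balanced c g)"
  proof (rule compactness_finite_colors[where D = "\<lambda>g. g"])
    show "finite g" if "g \<in> G" for g
      using G[OF that] by simp
    show "balanced c' g" if "\<forall>x\<in>g. c x = c' x" "balanced c g" for g c c'
    proof -
      have "{x \<in> g. c' x = a} = {x \<in> g. c x = a}" for a
        using that(1) by auto
      then show ?thesis using that(2) by (simp add: balanced_def)
    qed
    show "\<exists>c. range c \<subseteq> {..<3} \<and> (\<forall>g\<in>G0. balanced c g)" if G0: "finite G0" "G0 \<subseteq> G" for G0
    proof -
      have "card {g \<in> G0. x \<in> g} \<le> 2" for x
      proof -
        have "card {g \<in> G0. x \<in> g} \<le> card {g \<in> G. x \<in> g}"
          using two[of x] G0(2) by (intro card_mono) auto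
        then show ?thesis using two[of x] by linarith
      qed
      moreover have "\<And>g. g \<in> G0 \<Longrightarrow> finite g \<and> 4 \<le> card g"
        using G G0(2) by blast
      ultimately obtain c where "\<forall>x. c x < 3" "\<forall>g\<in>G0. balanced c g"
        using balanced_coloring_finite_family[OF G0(1)] by blast
      then show ?thesis by auto
    qed
  qed simp
  then show ?thesis by auto
qed

section \<open>Majority colorings\<close>

lemma balanced_Suc:
  assumes "balanced c A"
  shows "balanced (\<lambda>x. Suc (c x)) A"
  unfolding balanced_def
proof
  fix a
  show "2 * card {x \<in> A. Suc (c x) = a} \<le> card A"
    using assms by (cases a) (simp_all add: balanced_def)
qed

lemma balanced_imp_other_color:
  assumes "balanced c A" "finite A" "A \<noteq> {}"
  shows "\<exists>x\<in>A. c x \<noteq> a"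
proof (rule ccontr)
  assume "\<not> (\<exists>x\<in>A. c x \<noteq> a)"
  then have "{x \<in> A. c x = a} = A" by auto
  then show False using assms by (auto simp: balanced_def dest: spec[of _ a])
qed

lemma balanced_imp_majority_colored:
  assumes "finite (incident E v)" "balanced c (incident E v)"
  shows "majority_colored E c v"
  unfolding majority_colored_def
proof
  fix a
  have "{e \<in> incident E v. c e \<noteq> a} = incident E v - {e \<in> incident E v. c e = a}" by auto
  then have "card {e \<in> incident E v. c e \<noteq> a} =
      card (incident E v) - card {e \<in> incident E v. c e = a}"
    using assms(1) by (simp add: card_Diff_subset)
  then have "card {e \<in> incident E v. c e = a} \<le> card {e \<in> incident E v. c e \<noteq> a}"
    using assms(2) by (auto simp: balanced_def dest: spec[of _ a])
  then show "{e \<in> incident E v. c e = a} \<lesssim> {e \<in> incident E v. c e \<noteq> a}"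
    using assms(1) by (simp add: lepoll_iff_card_le)
qed

lemma infinite_disjoint_subsets:
  assumes "infinite A"
  shows "\<exists>B :: nat \<Rightarrow> 'a set. disjoint_family B \<and> (\<forall>m. B m \<subseteq> A \<and> card (B m) = k)"
proof -
  obtain f :: "nat \<Rightarrow> 'a" where f: "inj f" "range f \<subseteq> A"
    using infinite_countable_subset[OF assms] by blast
  define B where "B m = f ` {k * m..<k * m + k}" for m
  have "disjoint_family B"
    unfolding disjoint_family_on_def
  proof (intro ballI impI)
    fix m m' :: nat assume "m \<noteq> m'"
    have "k * m + k \<le> k * m'" if "m < m'" for m m' :: nat
      using mult_le_mono2[of "Suc m" m' k] that by simp
    then have "k * m + k \<le> k * m' \<or> k * m' + k \<le> k * m"
      using \<open>m \<noteq> m'\<close> by (meson nat_neq_iff)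
    then have "{k * m..<k * m + k} \<inter> {k * m'..<k * m' + k} = {}"
      by auto
    then show "B m \<inter> B m' = {}"
      unfolding B_def using f(1) by (simp add: image_Int[symmetric])
  qed
  moreover have "B m \<subseteq> A" for m
    using f(2) by (auto simp: B_def)
  moreover have "card (B m) = k" for m
    unfolding B_def using f(1) by (simp add: card_image inj_on_subset)
  ultimately show ?thesis by blast
qed

lemma majority_colored_if_blocks:
  fixes B :: "nat \<Rightarrow> 'a set set"
  assumes "countable (incident E v)" "disjoint_family B" "\<And>m. B m \<subseteq> incident E v"
    and other: "\<And>m a. \<exists>e\<in>B m. c e \<noteq> a"
  shows "majority_colored E c v"
  unfolding majority_colored_def
proof
  fix a
  obtain pick where pick: "\<And>m. pick m \<in> B m" "\<And>m. c (pick m) \<noteq> a"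
    using other[of _ a] by metis
  have "inj pick"
  proof (rule injI)
    fix m m' assume "pick m = pick m'"
    then have "pick m \<in> B m \<inter> B m'" using pick(1)[of m] pick(1)[of m'] by simp
    then show "m = m'" using assms(2) unfolding disjoint_family_on_def by blast
  qed
  then have "infinite (range pick)"
    by (simp add: finite_image_iff)
  moreover have "range pick \<subseteq> {e \<in> incident E v. c e \<noteq> a}"
    using assms(3) pick by auto
  ultimately have "infinite {e \<in> incident E v. c e \<noteq> a}"
    using infinite_super by blast
  then have other: "(UNIV :: nat set) \<lesssim> {e \<in> incident E v. c e \<noteq> a}"
    by (simp add: infinite_le_lepoll)
  have "countable {e \<in> incident E v. c e = a}"
    using assms(1) by (rule countable_subset[rotated]) auto
  then obtain f :: "'a set \<Rightarrow> nat" where f: "inj_on f {e \<in> incident E v. c e = a}"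
    by (rule countableE)
  have "{e \<in> incident E v. c e = a} \<lesssim> (UNIV :: nat set)"
    unfolding lepoll_def by (rule exI[of _ f]) (simp add: f)
  then show "{e \<in> incident E v. c e = a} \<lesssim> {e \<in> incident E v. c e \<noteq> a}"
    using other by (rule lepoll_trans)
qed

lemma edge_in_at_most_two_groups:
  fixes E :: "'a set set" and B :: "'a \<Rightarrow> nat \<Rightarrow> 'a set set"
  assumes edges: "\<And>e. e \<in> E \<Longrightarrow> card e = 2"
    and U: "\<And>v. v \<in> U \<Longrightarrow> finite (incident E v)"
    and W: "\<And>v. v \<in> W \<Longrightarrow>
      infinite (incident E v) \<and> disjoint_family (B v) \<and> (\<forall>m. B v m \<subseteq> incident E v)"
  defines "G \<equiv> incident E ` U \<union> (\<Union>v\<in>W. range (B v))"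
  shows "finite {g \<in> G. x \<in> g} \<and> card {g \<in> G. x \<in> g} \<le> 2"
proof (cases "x \<in> E")
  case False
  have "g \<subseteq> E" if "g \<in> G" for g
    using that W unfolding G_def incident_def by blast
  then have "{g \<in> G. x \<in> g} = {}"
    using False by blast
  then show ?thesis by (simp only:) simp
next
  case True
  then have "card x = 2" using edges by simp
  then have "finite x" by (simp add: card_ge_0_finite)
  define block where "block v = (if v \<in> U then incident E v else B v (SOME m. x \<in> B v m))" for v
  have sub: "{g \<in> G. x \<in> g} \<subseteq> block ` x"
  proof
    fix g assume "g \<in> {g \<in> G. x \<in> g}"
    then consider (finite_degree) v where "v \<in> U" "g = incident E v" "x \<in> g"
      | (infinite_degree) v m where "v \<in> W" "g = B v m" "x \<in> g"
      unfolding G_def by blast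
    then show "g \<in> block ` x"
    proof cases
      case finite_degree
      then show ?thesis
        by (intro image_eqI[where x = v]) (auto simp: block_def incident_def)
    next
      case infinite_degree
      note v = W[OF infinite_degree(1)]
      have "x \<in> B v (SOME m. x \<in> B v m)"
        using infinite_degree(2,3) by (metis someI)
      then have "(SOME m. x \<in> B v m) = m"
        using v infinite_degree(2,3) disjoint_family_onD[of "B v" UNIV "SOME m. x \<in> B v m" m]
        by blast
      moreover have "v \<in> x"
        using v infinite_degree(2,3) by (auto simp: incident_def)
      moreover have "v \<notin> U"
        using v U by blast
      ultimately show ?thesis
        using infinite_degree(2) by (intro image_eqI[where x = v]) (simp_all add: block_def)
    qed
  qed
  have "finite (block ` x)"
    using \<open>finite x\<close> by simp
  then have "finite {g \<in> G. x \<in> g}" "card {g \<in> G. x \<in> g} \<le> card (block ` x)"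
    using sub by (auto intro: finite_subset card_mono)
  moreover have "card (block ` x) \<le> 2"
    using card_image_le[OF \<open>finite x\<close>, of block] \<open>card x = 2\<close> by simp
  ultimately show ?thesis by simp
qed

lemma majority_coloring_exists:
  fixes E :: "'a set set"
  assumes edges: "\<And>e. e \<in> E \<Longrightarrow> card e = 2"
    and U: "\<And>v. v \<in> U \<Longrightarrow> finite (incident E v) \<and> 4 \<le> card (incident E v)"
    and W: "\<And>v. v \<in> W \<Longrightarrow> countable (incident E v) \<and> infinite (incident E v)"
  shows "\<exists>c. edge_3_coloring E c \<and> (\<forall>v\<in>U \<union> W. majority_colored E c v)"
proof -
  have "\<exists>Bv :: nat \<Rightarrow> 'a set set. disjoint_family Bv \<and> (\<forall>m. Bv m \<subseteq> incident E v \<and> card (Bv m) = 4)"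
    if "v \<in> W" for v
    using W[OF that] by (intro infinite_disjoint_subsets) simp
  then obtain B :: "'a \<Rightarrow> nat \<Rightarrow> 'a set set" where B: "\<And>v. v \<in> W \<Longrightarrow>
      disjoint_family (B v) \<and> (\<forall>m. B v m \<subseteq> incident E v \<and> card (B v m) = 4)"
    by metis
  define G where "G = incident E ` U \<union> (\<Union>v\<in>W. range (B v))"
  have "finite g \<and> 4 \<le> card g" if "g \<in> G" for g
    using that U B by (auto simp: G_def card_ge_0_finite)
  moreover have "finite {g \<in> G. x \<in> g} \<and> card {g \<in> G. x \<in> g} \<le> 2" for x
    unfolding G_def using edges U W B by (intro edge_in_at_most_two_groups) auto
  ultimately obtain c where c: "\<forall>x. c x < 3" "\<forall>g\<in>G. balanced c g"
    using balanced_coloring_family[of G] by blast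
  define c' where "c' e = Suc (c e)" for e
  have "edge_3_coloring E c'"
    using c(1) by (auto simp: edge_3_coloring_def c'_def less_Suc_eq numeral_3_eq_3)
  moreover have "majority_colored E c' v" if "v \<in> U" for v
  proof (rule balanced_imp_majority_colored)
    show "finite (incident E v)" using U[OF that] by simp
    show "balanced c' (incident E v)"
      using c(2) that unfolding c'_def by (auto simp: G_def intro: balanced_Suc)
  qed
  moreover have "majority_colored E c' v" if "v \<in> W" for v
  proof (rule majority_colored_if_blocks)
    show "countable (incident E v)" using W[OF that] by simp
    show "disjoint_family (B v)" "B v m \<subseteq> incident E v" for m
      using B[OF that] by auto
    show "\<exists>e\<in>B v m. c' e \<noteq> a" for m a
    proof (rule balanced_imp_other_color)
      have "B v m \<in> G" using that by (auto simp: G_def)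
      then show "balanced c' (B v m)"
        using c(2) unfolding c'_def by (blast intro: balanced_Suc)
      have "card (B v m) = 4" using B[OF that] by blast
      then show "finite (B v m)" "B v m \<noteq> {}"
        by (auto simp: card_ge_0_finite)
    qed
  qed
  ultimately show ?thesis by blast
qed

lemma majority_coloring_countable:
  assumes "simple_graph V E" "countable V" and VF: "\<forall>v\<in>VF. finite_degree_ge E 4 v"
  shows "\<exists>c. edge_3_coloring E c \<and> (\<forall>v\<in>VF. majority_colored E c v) \<and>
           (\<forall>v\<in>V. infinite (incident E v) \<longrightarrow> majority_colored E c v)"
proof -
  have edges: "card e = 2 \<and> e \<subseteq> V" if "e \<in> E" for e
    using assms(1) that by (simp add: simple_graph_def)
  then have "E \<subseteq> {A. finite A \<and> A \<subseteq> V}"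
    by (auto simp: card_ge_0_finite)
  then have "countable E"
    using countable_Collect_finite_subset[OF \<open>countable V\<close>] by (rule countable_subset)
  then have "countable (incident E v)" for v
    by (rule countable_subset[rotated]) (auto simp: incident_def)
  then have infinite_degree: "countable (incident E v) \<and> infinite (incident E v)"
    if "v \<in> {v \<in> V. infinite (incident E v)}" for v
    using that by simp
  have finite_degree: "finite (incident E v) \<and> 4 \<le> card (incident E v)" if "v \<in> VF" for v
    using VF that by (simp add: finite_degree_ge_def)
  have "card e = 2" if "e \<in> E" for e
    using edges that by blast
  then obtain c where "edge_3_coloring E c"
      and "\<forall>v\<in>VF \<union> {v \<in> V. infinite (incident E v)}. majority_colored E c v"
    using majority_coloring_exists[OF _ finite_degree infinite_degree] by blast
  then show ?thesis by blast
qed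

lemma majority_coloring_locally_finite:
  assumes "simple_graph V E" "locally_finite V E" "\<forall>v\<in>V. 4 \<le> card (incident E v)"
  shows "\<exists>c. edge_3_coloring E c \<and> (\<forall>v\<in>V. majority_colored E c v)"
  using majority_coloring_exists[of E V "{}"] assms
  by (auto simp: simple_graph_def locally_finite_def)

theorem mainTheorem12:
  shows "(\<forall>(V :: 'a set) E VF EF.
            simple_graph V E \<and> countable V \<and> infinite V \<and>
            subgraph VF EF V E \<and> connected_graph VF EF \<and>
            (\<forall>v\<in>VF. finite_degree_ge E 4 v) \<and>
            (\<forall>v\<in>V - VF. \<exists>u\<in>VF. {u, v} \<in> E)
          \<longrightarrow> (\<exists>c. edge_3_coloring E c \<and>
                   (\<forall>v\<in>VF. majority_colored E c v) \<and>
                   (\<forall>v\<in>V. infinite (incident E v) \<longrightarrow> majority_colored E c v)))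
       \<and>
       (\<forall>(V :: 'a set) E.
            simple_graph V E \<and> locally_finite V E \<and>
            (\<forall>v\<in>V. card (incident E v) \<ge> 4)
          \<longrightarrow> (\<exists>c. edge_3_coloring E c \<and> (\<forall>v\<in>V. majority_colored E c v)))"
  by (intro conjI allI impI; elim conjE)
    (blast intro: majority_coloring_countable majority_coloring_locally_finite)+

end
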